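(* Let $X,Y$ be random variables on finite alphabets $\mathcal{X},\mathcal{Y}$ with $|\mathcal{X}|<|\mathcal{Y}|$ and joint pmf $P_{XY}$ whose marginals $P_X,P_Y$ have all entries positive, and suppose the $|\mathcal{X}|\times|\mathcal{Y}|$ matrix $P_{X|Y}$ has full row rank. Let $\epsilon\ge0$. Consider the problem of maximizing $I(U;Y)$ over all finite alphabets $\mathcal{U}$ and kernels $P_{U|Y}$, where the joint distribution is $P_{XYU}(x,y,u)=P_{XY}(x,y)P_{U|Y}(u|y)$ (so $X-Y-U$ is a Markov chain), subject to $\|P_{X|U=u}-P_X\|_1\le\epsilon$ for all $u\in\mathcal{U}$ (with $P_U(u)>0$). Then the supremum of this problem equals the supremum over those $U$ with $|\mathcal{U}|\le|\mathcal{Y}|$, and this supremum is achieved (so it is a maximum).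
   Context: $\|\cdot\|_1$ denotes the $\ell_1$ norm of a vector indexed by $\mathcal{X}$. The matrix $P_{X|Y}$ has entries $P_{X|Y}(x|y)$, rows indexed by $x$ and columns by $y$. *)

theory Defs
  imports "HOL-Analysis.Analysis"
begin

text \<open>The auxiliary alphabet of U is {..<k} (any finite alphabet up to relabelling);
  the kernel is W y u = P_{U|Y}(u|y).\<close>

definition is_pmf2 :: "('x::finite \<Rightarrow> 'y::finite \<Rightarrow> real) \<Rightarrow> bool" where
  "is_pmf2 P \<longleftrightarrow> (\<forall>x y. 0 \<le> P x y) \<and> (\<Sum>x\<in>UNIV. \<Sum>y\<in>UNIV. P x y) = 1"

definition marg_X :: "('x::finite \<Rightarrow> 'y::finite \<Rightarrow> real) \<Rightarrow> 'x \<Rightarrow> real" where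
  "marg_X P x = (\<Sum>y\<in>UNIV. P x y)"

definition marg_Y :: "('x::finite \<Rightarrow> 'y::finite \<Rightarrow> real) \<Rightarrow> 'y \<Rightarrow> real" where
  "marg_Y P y = (\<Sum>x\<in>UNIV. P x y)"

definition cond_XY_matrix :: "('x::finite \<Rightarrow> 'y::finite \<Rightarrow> real) \<Rightarrow> real^'y^'x" where
  "cond_XY_matrix P = (\<chi> x y. P x y / marg_Y P y)"

definition is_kernel :: "nat \<Rightarrow> ('y::finite \<Rightarrow> nat \<Rightarrow> real) \<Rightarrow> bool" where
  "is_kernel k W \<longleftrightarrow> (\<forall>y u. u < k \<longrightarrow> 0 \<le> W y u) \<and> (\<forall>y. (\<Sum>u<k. W y u) = 1)"

definition marg_U :: "('x::finite \<Rightarrow> 'y::finite \<Rightarrow> real) \<Rightarrow> ('y \<Rightarrow> nat \<Rightarrow> real) \<Rightarrow> nat \<Rightarrow> real" where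
  "marg_U P W u = (\<Sum>y\<in>UNIV. marg_Y P y * W y u)"

definition cond_XU :: "('x::finite \<Rightarrow> 'y::finite \<Rightarrow> real) \<Rightarrow> ('y \<Rightarrow> nat \<Rightarrow> real) \<Rightarrow> 'x \<Rightarrow> nat \<Rightarrow> real" where
  "cond_XU P W x u = (\<Sum>y\<in>UNIV. P x y * W y u) / marg_U P W u"

definition mutual_info_UY :: "('x::finite \<Rightarrow> 'y::finite \<Rightarrow> real) \<Rightarrow> nat \<Rightarrow> ('y \<Rightarrow> nat \<Rightarrow> real) \<Rightarrow> real" where
  "mutual_info_UY P k W =
     (\<Sum>y\<in>UNIV. \<Sum>u<k. (let q = marg_Y P y * W y u in
        if q = 0 then 0 else q * ln (W y u / marg_U P W u)))"

definition feasible :: "('x::finite \<Rightarrow> 'y::finite \<Rightarrow> real) \<Rightarrow> real \<Rightarrow> nat \<Rightarrow> ('y \<Rightarrow> nat \<Rightarrow> real) \<Rightarrow> bool" where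
  "feasible P eps k W \<longleftrightarrow> is_kernel k W \<and>
     (\<forall>u<k. 0 < marg_U P W u \<longrightarrow> (\<Sum>x\<in>UNIV. \<bar>cond_XU P W x u - marg_X P x\<bar>) \<le> eps)"

end

theory Submission
  imports Defs "HOL-Real_Asymp.Real_Asymp"
begin

text \<open>With f t = t ln t, the mutual information is a sum over the letters u of
  \<Sum>y P_Y(y) f(W(u|y)) - f(P_U(u)), a functional of the column W(.|u) that is positively
  homogeneous of degree one; multiplied by P_U(u), the leakage constraint on u becomes a cone
  condition on that column. A kernel is thus a decomposition of the all-ones vector on Y into
  admissible columns, and reweighting its columns is a linear program with |Y| equality
  constraints, whose basic solutions use at most |Y| columns without lowering the objective.
  Kernels with |Y| letters form a compact set on which I(U;Y) is continuous, so the maximum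
  over them is attained and, by the reduction, is the global maximum.\<close>

lemma exists_vanishing_combination:
  fixes v :: "'i \<Rightarrow> 'a::euclidean_space"
  assumes "finite S" "DIM('a) < card S"
  shows "\<exists>c. (\<exists>i\<in>S. c i \<noteq> 0) \<and> (\<Sum>i\<in>S. c i *\<^sub>R v i) = 0"
proof (cases "inj_on v S")
  case False
  then obtain i j where ij: "i \<in> S" "j \<in> S" "i \<noteq> j" "v i = v j"
    unfolding inj_on_def by blast
  define c where "c k = (if k = i then 1 else if k = j then -1 else (0::real))" for k
  have "(\<Sum>k\<in>S. c k *\<^sub>R v k) = (\<Sum>k\<in>{i, j}. c k *\<^sub>R v k)"
    using ij assms(1) by (intro sum.mono_neutral_right) (auto simp: c_def)
  also have "\<dots> = 0" using ij by (simp add: c_def)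
  finally show ?thesis using ij by (intro exI[of _ c]) (auto simp: c_def)
next
  case True
  then have "dependent (v ` S)"
    using independent_bound[of "v ` S"] assms by (auto simp: card_image)
  then obtain a where a: "\<exists>x\<in>v ` S. a x \<noteq> 0" "(\<Sum>x\<in>v ` S. a x *\<^sub>R x) = 0"
    using dependent_finite[of "v ` S"] assms(1) by auto
  then show ?thesis
    using True by (intro exI[of _ "a \<circ> v"]) (auto simp: sum.reindex)
qed

lemma exists_vanishing_combination_with_negative_coeff:
  fixes v :: "'i \<Rightarrow> 'a::euclidean_space" and f :: "'a \<Rightarrow> real"
  assumes "finite S" "DIM('a) < card S" "linear f" "\<forall>i\<in>S. 0 < f (v i)"
  shows "\<exists>c. (\<exists>i\<in>S. c i < 0) \<and> (\<Sum>i\<in>S. c i *\<^sub>R v i) = 0 \<and> 0 \<le> (\<Sum>i\<in>S. c i * a i)"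
proof -
  obtain c0 where c0: "\<exists>i\<in>S. c0 i \<noteq> 0" "(\<Sum>i\<in>S. c0 i *\<^sub>R v i) = 0"
    using exists_vanishing_combination[OF assms(1,2)] by blast
  define c where "c = (if 0 \<le> (\<Sum>i\<in>S. c0 i * a i) then c0 else - c0)"
  have c: "\<exists>i\<in>S. c i \<noteq> 0" "(\<Sum>i\<in>S. c i *\<^sub>R v i) = 0" "0 \<le> (\<Sum>i\<in>S. c i * a i)"
    using c0 by (auto simp: c_def sum_negf)
  have "\<exists>i\<in>S. c i < 0"
  proof (rule ccontr)
    assume nonneg: "\<not> (\<exists>i\<in>S. c i < 0)"
    then have "\<forall>i\<in>S. 0 \<le> c i * f (v i)" using assms(4) by (auto simp: not_less)
    moreover obtain i where "i \<in> S" "0 < c i * f (v i)"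
      using c(1) nonneg assms(4) by (force simp: not_less)
    ultimately have "0 < (\<Sum>i\<in>S. c i * f (v i))"
      using assms(1) by (intro sum_pos2) auto
    also have "(\<Sum>i\<in>S. c i * f (v i)) = f (\<Sum>i\<in>S. c i *\<^sub>R v i)"
      using assms(3) by (simp add: linear_sum linear_scale)
    finally show False using c(2) assms(3) by (simp add: linear_0)
  qed
  then show ?thesis using c by blast
qed

text \<open>A simplex pivot: move along a vanishing combination, in the direction that does not
  decrease the objective, until the first weight hits zero.\<close>
lemma conic_support_shrink:
  fixes v :: "'i \<Rightarrow> 'a::euclidean_space" and f :: "'a \<Rightarrow> real"
  assumes "finite U" "linear f" "\<forall>i\<in>U. 0 < f (v i)" "\<forall>i\<in>U. 0 \<le> l i"
    and "DIM('a) < card {i\<in>U. l i \<noteq> 0}"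
  shows "\<exists>l'. (\<forall>i\<in>U. 0 \<le> l' i) \<and> (\<Sum>i\<in>U. l' i *\<^sub>R v i) = (\<Sum>i\<in>U. l i *\<^sub>R v i)
    \<and> (\<Sum>i\<in>U. l i * a i) \<le> (\<Sum>i\<in>U. l' i * a i) \<and> card {i\<in>U. l' i \<noteq> 0} < card {i\<in>U. l i \<noteq> 0}"
proof -
  define S where "S = {i\<in>U. l i \<noteq> 0}"
  have "finite S" "S \<subseteq> U" using assms(1) by (auto simp: S_def)
  obtain c0 where c0: "\<exists>i\<in>S. c0 i < 0" "(\<Sum>i\<in>S. c0 i *\<^sub>R v i) = 0" "0 \<le> (\<Sum>i\<in>S. c0 i * a i)"
    using exists_vanishing_combination_with_negative_coeff[OF \<open>finite S\<close> _ assms(2), of v a]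
      assms(3,5) \<open>S \<subseteq> U\<close> by (auto simp: S_def)
  define c where "c i = (if i \<in> S then c0 i else 0)" for i
  have "(\<Sum>i\<in>U. c i * a i) = (\<Sum>i\<in>S. c i * a i)" "(\<Sum>i\<in>U. c i *\<^sub>R v i) = (\<Sum>i\<in>S. c i *\<^sub>R v i)"
    using assms(1) \<open>S \<subseteq> U\<close> by (intro sum.mono_neutral_right; auto simp: c_def)+
  then have sum_ca: "0 \<le> (\<Sum>i\<in>U. c i * a i)" and sum_cv: "(\<Sum>i\<in>U. c i *\<^sub>R v i) = 0"
    using c0(2,3) by (simp_all add: c_def)
  define N where "N = {i\<in>S. c i < 0}"
  have "finite N" "N \<noteq> {}" using \<open>finite S\<close> c0(1) by (auto simp: N_def c_def)
  define t where "t = Min ((\<lambda>i. l i / - c i) ` N)"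
  have "t \<in> (\<lambda>i. l i / - c i) ` N"
    unfolding t_def using \<open>finite N\<close> \<open>N \<noteq> {}\<close> by (intro Min_in) auto
  then obtain i0 where i0: "i0 \<in> N" "t = l i0 / - c i0" by blast
  have t_le: "t \<le> l i / - c i" if "i \<in> N" for i
    using \<open>finite N\<close> that by (simp add: t_def)
  have "0 \<le> t" using i0 assms(4) \<open>S \<subseteq> U\<close> by (force simp: N_def intro: divide_nonneg_neg)
  define l' where "l' i = l i + t * c i" for i
  have l'_nonneg: "0 \<le> l' i" if "i \<in> U" for i
  proof (cases "i \<in> N")
    case True
    then show ?thesis using t_le[OF True] by (simp add: N_def l'_def field_simps)
  next
    case False
    then show ?thesis
      using that assms(4) \<open>0 \<le> t\<close> by (auto simp: N_def l'_def c_def not_less)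
  qed
  have l'_combination: "(\<Sum>i\<in>U. l' i *\<^sub>R v i) = (\<Sum>i\<in>U. l i *\<^sub>R v i)"
    using sum_cv by (simp add: l'_def scaleR_add_left sum.distrib flip: scaleR_scaleR scaleR_sum_right)
  have l'_objective: "(\<Sum>i\<in>U. l i * a i) \<le> (\<Sum>i\<in>U. l' i * a i)"
    using sum_ca \<open>0 \<le> t\<close>
    by (simp add: l'_def distrib_right sum.distrib mult.assoc flip: sum_distrib_left)
  have "{i\<in>U. l' i \<noteq> 0} \<subseteq> S - {i0}"
    using i0 by (auto simp: l'_def c_def S_def N_def)
  then have "card {i\<in>U. l' i \<noteq> 0} \<le> card (S - {i0})"
    using \<open>finite S\<close> by (intro card_mono) auto
  also have "\<dots> < card S"
    using \<open>finite S\<close> i0(1) by (intro card_Diff1_less) (auto simp: N_def)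
  finally have "card {i\<in>U. l' i \<noteq> 0} < card S" .
  then show ?thesis
    using l'_nonneg l'_combination l'_objective unfolding S_def by blast
qed

lemma conic_support_reduction:
  fixes v :: "'i \<Rightarrow> 'a::euclidean_space" and f :: "'a \<Rightarrow> real"
  assumes "finite U" "linear f" "\<forall>i\<in>U. 0 < f (v i)" "\<forall>i\<in>U. 0 \<le> l i"
  shows "\<exists>l'. (\<forall>i\<in>U. 0 \<le> l' i) \<and> (\<Sum>i\<in>U. l' i *\<^sub>R v i) = (\<Sum>i\<in>U. l i *\<^sub>R v i)
    \<and> (\<Sum>i\<in>U. l i * a i) \<le> (\<Sum>i\<in>U. l' i * a i) \<and> card {i\<in>U. l' i \<noteq> 0} \<le> DIM('a)"
proof -
  define Q where "Q l' \<longleftrightarrow> (\<forall>i\<in>U. 0 \<le> l' i) \<and> (\<Sum>i\<in>U. l' i *\<^sub>R v i) = (\<Sum>i\<in>U. l i *\<^sub>R v i)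
    \<and> (\<Sum>i\<in>U. l i * a i) \<le> (\<Sum>i\<in>U. l' i * a i)" for l'
  obtain l0 where "Q l0" and l0_min: "\<And>l'. Q l' \<Longrightarrow> card {i\<in>U. l0 i \<noteq> 0} \<le> card {i\<in>U. l' i \<noteq> 0}"
    using ex_has_least_nat[of Q l "\<lambda>l'. card {i\<in>U. l' i \<noteq> 0}"] assms(4) by (auto simp: Q_def)
  have "card {i\<in>U. l0 i \<noteq> 0} \<le> DIM('a)"
  proof (rule ccontr)
    assume "\<not> ?thesis"
    then obtain l1 where l1: "\<forall>i\<in>U. 0 \<le> l1 i" "(\<Sum>i\<in>U. l1 i *\<^sub>R v i) = (\<Sum>i\<in>U. l0 i *\<^sub>R v i)"
        "(\<Sum>i\<in>U. l0 i * a i) \<le> (\<Sum>i\<in>U. l1 i * a i)"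
        "card {i\<in>U. l1 i \<noteq> 0} < card {i\<in>U. l0 i \<noteq> 0}"
      using conic_support_shrink[OF assms(1-3), of l0 a] \<open>Q l0\<close> by (auto simp: Q_def not_le)
    then have "Q l1" using \<open>Q l0\<close> by (auto simp: Q_def)
    then show False using l0_min l1(4) by fastforce
  qed
  then show ?thesis using \<open>Q l0\<close> unfolding Q_def by blast
qed

definition xlnx :: "real \<Rightarrow> real" where
  "xlnx t = t * ln t"

definition info_col :: "('x::finite \<Rightarrow> 'y::finite \<Rightarrow> real) \<Rightarrow> ('y \<Rightarrow> real) \<Rightarrow> real" where
  "info_col P w = (\<Sum>y\<in>UNIV. marg_Y P y * xlnx (w y)) - xlnx (\<Sum>y\<in>UNIV. marg_Y P y * w y)"

text \<open>The leakage constraint on a letter u with column w = W(u|.), multiplied by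
  P_U(u) = \<Sum>y P_Y(y) w(y): it becomes homogeneous in w and holds trivially when P_U(u) = 0,
  where feasible imposes nothing.\<close>
definition col_feasible :: "('x::finite \<Rightarrow> 'y::finite \<Rightarrow> real) \<Rightarrow> real \<Rightarrow> ('y \<Rightarrow> real) \<Rightarrow> bool" where
  "col_feasible P eps w \<longleftrightarrow> (\<forall>y. 0 \<le> w y) \<and>
     (\<Sum>x\<in>UNIV. \<bar>(\<Sum>y\<in>UNIV. P x y * w y) - (\<Sum>y\<in>UNIV. marg_Y P y * w y) * marg_X P x\<bar>)
       \<le> eps * (\<Sum>y\<in>UNIV. marg_Y P y * w y)"

lemma continuous_on_xlnx: "continuous_on {0..} xlnx"
proof -
  have "((\<lambda>t::real. t * ln t) \<longlongrightarrow> 0) (at_right 0)" by real_asymp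
  then have "(xlnx \<longlongrightarrow> xlnx 0) (at_right 0)"
    by (simp add: xlnx_def[abs_def])
  then have "continuous (at 0 within {0..}) xlnx"
    by (simp add: continuous_within at_within_Ici_at_right)
  moreover have "continuous (at t within {0..}) xlnx" if "0 < t" for t
    using that unfolding xlnx_def by (intro continuous_intros) auto
  ultimately show ?thesis
    unfolding continuous_on_eq_continuous_within by (metis atLeast_iff order_le_less)
qed

lemma xlnx_mult:
  assumes "0 \<le> l" "0 \<le> t"
  shows "xlnx (l * t) = l * xlnx t + l * t * ln l"
  using assms by (cases "l = 0 \<or> t = 0") (auto simp: xlnx_def ln_mult algebra_simps)

lemma marg_U_nonneg:
  fixes P :: "'x::finite \<Rightarrow> 'y::finite \<Rightarrow> real"
  assumes "\<forall>y. 0 < marg_Y P y" "\<forall>y. 0 \<le> W y u"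
  shows "0 \<le> marg_U P W u"
  unfolding marg_U_def using assms by (intro sum_nonneg) (simp add: less_imp_le)

lemma col_eq_0_if_marg_U_eq_0:
  fixes P :: "'x::finite \<Rightarrow> 'y::finite \<Rightarrow> real"
  assumes "\<forall>y. 0 < marg_Y P y" "\<forall>y. 0 \<le> W y u" "marg_U P W u = 0"
  shows "W y u = 0"
proof -
  have "marg_Y P y * W y u = 0"
    using assms sum_nonneg_eq_0_iff[of UNIV "\<lambda>y. marg_Y P y * W y u"]
    by (simp add: marg_U_def less_imp_le)
  then show ?thesis using assms(1) by (metis less_irrefl mult_eq_0_iff)
qed

lemma info_col_zero [simp]: "info_col P (\<lambda>_. 0) = 0"
  by (simp add: info_col_def xlnx_def)

lemma info_col_scale:
  fixes P :: "'x::finite \<Rightarrow> 'y::finite \<Rightarrow> real"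
  assumes "\<forall>y. 0 < marg_Y P y" "\<forall>y. 0 \<le> w y" "0 \<le> l"
  shows "info_col P (\<lambda>y. l * w y) = l * info_col P w"
proof -
  define m where "m = (\<Sum>y\<in>UNIV. marg_Y P y * w y)"
  have "0 \<le> m" unfolding m_def using assms by (intro sum_nonneg) (simp add: less_imp_le)
  have "(\<Sum>y\<in>UNIV. marg_Y P y * (l * w y)) = l * m"
    by (simp add: m_def sum_distrib_left algebra_simps)
  moreover have "marg_Y P y * xlnx (l * w y) = l * (marg_Y P y * xlnx (w y)) + l * ln l * (marg_Y P y * w y)" for y
    using assms by (simp add: xlnx_mult less_imp_le algebra_simps)
  ultimately have "info_col P (\<lambda>y. l * w y)
      = l * (\<Sum>y\<in>UNIV. marg_Y P y * xlnx (w y)) + l * ln l * m - xlnx (l * m)"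
    by (simp add: info_col_def sum.distrib m_def flip: sum_distrib_left)
  also have "\<dots> = l * info_col P w"
    using \<open>0 \<le> m\<close> assms(3) by (simp add: info_col_def xlnx_mult m_def algebra_simps)
  finally show ?thesis .
qed

lemma col_feasible_zero [simp]: "col_feasible P eps (\<lambda>_. 0)"
  by (simp add: col_feasible_def)

lemma col_feasible_scale:
  assumes "col_feasible P eps w" "0 \<le> l"
  shows "col_feasible P eps (\<lambda>y. l * w y)"
proof -
  have scaled: "(\<Sum>y\<in>UNIV. P x y * (l * w y)) - (\<Sum>y\<in>UNIV. marg_Y P y * (l * w y)) * marg_X P x
      = l * ((\<Sum>y\<in>UNIV. P x y * w y) - (\<Sum>y\<in>UNIV. marg_Y P y * w y) * marg_X P x)" for x
    by (simp add: sum_distrib_left algebra_simps)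
  have "(\<Sum>x\<in>UNIV. \<bar>(\<Sum>y\<in>UNIV. P x y * (l * w y)) - (\<Sum>y\<in>UNIV. marg_Y P y * (l * w y)) * marg_X P x\<bar>)
      = l * (\<Sum>x\<in>UNIV. \<bar>(\<Sum>y\<in>UNIV. P x y * w y) - (\<Sum>y\<in>UNIV. marg_Y P y * w y) * marg_X P x\<bar>)"
    using assms(2) by (simp add: scaled abs_mult sum_distrib_left)
  also have "\<dots> \<le> l * (eps * (\<Sum>y\<in>UNIV. marg_Y P y * w y))"
    using assms by (intro mult_left_mono) (auto simp: col_feasible_def)
  also have "\<dots> = eps * (\<Sum>y\<in>UNIV. marg_Y P y * (l * w y))"
    by (simp add: sum_distrib_left algebra_simps)
  finally show ?thesis
    using assms by (simp add: col_feasible_def)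
qed

lemma col_feasible_one:
  assumes "is_pmf2 P" "0 \<le> eps"
  shows "col_feasible P eps (\<lambda>_. 1)"
proof -
  have "(\<Sum>y\<in>UNIV. marg_Y P y) = (\<Sum>x\<in>UNIV. \<Sum>y\<in>UNIV. P x y)"
    unfolding marg_Y_def by (rule sum.swap)
  also have "\<dots> = 1"
    using assms(1) by (simp add: is_pmf2_def)
  finally show ?thesis
    using assms(2) by (simp add: col_feasible_def marg_X_def)
qed

lemma l1_dist_divide_le_iff:
  fixes m :: real
  assumes "0 < m"
  shows "(\<Sum>x\<in>A. \<bar>s x / m - b x\<bar>) \<le> e \<longleftrightarrow> (\<Sum>x\<in>A. \<bar>s x - m * b x\<bar>) \<le> e * m"
proof -
  have "s x / m - b x = (s x - m * b x) / m" for x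
    using assms by (simp add: field_simps)
  then have "\<bar>s x / m - b x\<bar> = \<bar>s x - m * b x\<bar> / m" for x
    using assms by simp
  then show ?thesis
    using assms by (simp add: sum_divide_distrib[symmetric] pos_divide_le_eq)
qed

lemma feasible_iff_col_feasible:
  fixes P :: "'x::finite \<Rightarrow> 'y::finite \<Rightarrow> real"
  assumes "\<forall>y. 0 < marg_Y P y"
  shows "feasible P eps k W \<longleftrightarrow>
    (\<forall>y. (\<Sum>u<k. W y u) = 1) \<and> (\<forall>u<k. col_feasible P eps (\<lambda>y. W y u))"
proof -
  have col_iff: "(0 < marg_U P W u \<longrightarrow> (\<Sum>x\<in>UNIV. \<bar>cond_XU P W x u - marg_X P x\<bar>) \<le> eps)
      \<longleftrightarrow> col_feasible P eps (\<lambda>y. W y u)" if "\<forall>y. 0 \<le> W y u" for u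
  proof (cases "marg_U P W u = 0")
    case True
    have "W y u = 0" for y
      by (rule col_eq_0_if_marg_U_eq_0[of P W u, OF assms that True])
    then show ?thesis by (simp add: True col_feasible_def)
  next
    case False
    then have "0 < marg_U P W u"
      using marg_U_nonneg[of P W u, OF assms that] by simp
    then show ?thesis
      using that l1_dist_divide_le_iff[OF \<open>0 < marg_U P W u\<close>]
      by (simp add: col_feasible_def cond_XU_def marg_U_def mult.commute)
  qed
  have "\<forall>y. 0 \<le> W y u" if "col_feasible P eps (\<lambda>y. W y u)" for u
    using that by (simp add: col_feasible_def)
  then show ?thesis
    unfolding feasible_def is_kernel_def using col_iff by blast
qed

lemma mutual_info_column_eq_info_col:
  fixes P :: "'x::finite \<Rightarrow> 'y::finite \<Rightarrow> real"
  assumes "\<forall>y. 0 < marg_Y P y" "\<forall>y. 0 \<le> W y u"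
  shows "(\<Sum>y\<in>UNIV. (let q = marg_Y P y * W y u in
            if q = 0 then 0 else q * ln (W y u / marg_U P W u)))
         = info_col P (\<lambda>y. W y u)"
proof (cases "marg_U P W u = 0")
  case True
  have "W y u = 0" for y
    by (rule col_eq_0_if_marg_U_eq_0[of P W u, OF assms True])
  then show ?thesis by (simp add: info_col_def xlnx_def)
next
  case False
  then have "0 < marg_U P W u"
    using marg_U_nonneg[of P W u, OF assms] by simp
  then have "(let q = marg_Y P y * W y u in if q = 0 then 0 else q * ln (W y u / marg_U P W u))
      = marg_Y P y * xlnx (W y u) - marg_Y P y * W y u * ln (marg_U P W u)" for y
    using assms by (cases "W y u = 0") (auto simp: xlnx_def ln_div order_less_le algebra_simps)
  then show ?thesis
    by (simp add: info_col_def xlnx_def marg_U_def sum_subtractf flip: sum_distrib_right)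
qed

lemma mutual_info_UY_eq_sum_info_col:
  fixes P :: "'x::finite \<Rightarrow> 'y::finite \<Rightarrow> real"
  assumes "\<forall>y. 0 < marg_Y P y" "\<forall>y u. u < k \<longrightarrow> 0 \<le> W y u"
  shows "mutual_info_UY P k W = (\<Sum>u<k. info_col P (\<lambda>y. W y u))"
  unfolding mutual_info_UY_def
  by (subst sum.swap) (intro sum.cong refl mutual_info_column_eq_info_col; use assms in auto)

definition kernel_of_cols :: "nat \<Rightarrow> (nat \<Rightarrow> 'j) \<Rightarrow> ('j \<Rightarrow> 'y \<Rightarrow> real) \<Rightarrow> 'y \<Rightarrow> nat \<Rightarrow> real" where
  "kernel_of_cols n g c y u = (if u < n then c (g u) y else 0)"

lemma sum_cols_kernel_of_cols:
  assumes "bij_betw g {..<n} J" "n \<le> k" "F (\<lambda>_. 0) = 0"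
  shows "(\<Sum>u<k. F (\<lambda>y. kernel_of_cols n g c y u)) = (\<Sum>j\<in>J. F (c j))"
proof -
  have "(\<Sum>u<k. F (\<lambda>y. kernel_of_cols n g c y u)) = (\<Sum>u<n. F (c (g u)))"
    using assms(2,3) by (intro sum.mono_neutral_cong_right) (auto simp: kernel_of_cols_def)
  also have "\<dots> = (\<Sum>j\<in>J. F (c j))"
    using sum.reindex_bij_betw[OF assms(1)] .
  finally show ?thesis .
qed

lemma feasible_kernel_of_cols:
  fixes P :: "'x::finite \<Rightarrow> 'y::finite \<Rightarrow> real"
  assumes "\<forall>y. 0 < marg_Y P y" "bij_betw g {..<n} J" "n \<le> k"
    and "\<forall>j\<in>J. col_feasible P eps (c j)" "\<forall>y. (\<Sum>j\<in>J. c j y) = 1"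
  shows "feasible P eps k (kernel_of_cols n g c)"
proof -
  have "(\<Sum>u<k. kernel_of_cols n g c y u) = 1" for y
    using sum_cols_kernel_of_cols[OF assms(2,3), of "\<lambda>w. w y"] assms(5) by simp
  moreover have "col_feasible P eps (\<lambda>y. kernel_of_cols n g c y u)" for u
    using assms(2,4) by (cases "u < n") (auto simp: kernel_of_cols_def bij_betw_def)
  ultimately show ?thesis
    by (simp add: feasible_iff_col_feasible[OF assms(1)])
qed

lemma mutual_info_kernel_of_cols:
  fixes P :: "'x::finite \<Rightarrow> 'y::finite \<Rightarrow> real"
  assumes "\<forall>y. 0 < marg_Y P y" "bij_betw g {..<n} J" "n \<le> k" "\<forall>j\<in>J. \<forall>y. 0 \<le> c j y"
  shows "mutual_info_UY P k (kernel_of_cols n g c) = (\<Sum>j\<in>J. info_col P (c j))"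
proof -
  have "\<forall>y u. u < k \<longrightarrow> 0 \<le> kernel_of_cols n g c y u"
    using assms(2,4) by (auto simp: kernel_of_cols_def bij_betw_def)
  then show ?thesis
    by (simp add: mutual_info_UY_eq_sum_info_col[OF assms(1)] sum_cols_kernel_of_cols[OF assms(2,3)])
qed

lemma feasible_reweight_cols:
  fixes P :: "'x::finite \<Rightarrow> 'y::finite \<Rightarrow> real"
  assumes "\<forall>y. 0 < marg_Y P y" "feasible P eps k W" "U \<subseteq> {..<k}" "\<forall>u\<in>U. 0 \<le> l u"
    and "\<forall>y. (\<Sum>u\<in>U. l u * W y u) = 1" "card {u\<in>U. l u \<noteq> 0} \<le> K"
  shows "\<exists>W'. feasible P eps K W' \<and> mutual_info_UY P K W' = (\<Sum>u\<in>U. l u * info_col P (\<lambda>y. W y u))"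
proof -
  define T where "T = {u\<in>U. l u \<noteq> 0}"
  have "T \<subseteq> U" by (auto simp: T_def)
  then have "finite T"
    using assms(3) by (blast intro: finite_subset[of _ "{..<k}"])
  then obtain g where g: "bij_betw g {..<card T} T"
    using ex_bij_betw_nat_finite by (metis atLeast0LessThan)
  define c where "c u = (\<lambda>y. l u * W y u)" for u
  have col_feasible: "col_feasible P eps (\<lambda>y. W y u)" if "u \<in> U" for u
    using assms(1-3) that by (auto simp: feasible_iff_col_feasible)
  then have c_nonneg: "\<forall>u\<in>T. \<forall>y. 0 \<le> c u y"
    using assms(4) \<open>T \<subseteq> U\<close> by (auto simp: c_def col_feasible_def)
  have sum_T: "(\<Sum>u\<in>T. l u * f u) = (\<Sum>u\<in>U. l u * f u)" for f :: "nat \<Rightarrow> real"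
    using assms(3) \<open>T \<subseteq> U\<close> by (intro sum.mono_neutral_left) (auto simp: T_def finite_subset)
  have "feasible P eps K (kernel_of_cols (card T) g c)"
    using assms(1,4,5,6) col_feasible \<open>T \<subseteq> U\<close> sum_T
    by (intro feasible_kernel_of_cols[OF _ g]) (auto simp: c_def T_def col_feasible_scale)
  moreover have "mutual_info_UY P K (kernel_of_cols (card T) g c) = (\<Sum>u\<in>T. info_col P (c u))"
    using assms(1,6) c_nonneg by (intro mutual_info_kernel_of_cols[OF _ g]) (auto simp: T_def)
  moreover have "\<dots> = (\<Sum>u\<in>U. l u * info_col P (\<lambda>y. W y u))"
    using assms(1,4) col_feasible \<open>T \<subseteq> U\<close>
    by (auto simp: c_def info_col_scale col_feasible_def sum_T[symmetric] intro!: sum.cong)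
  ultimately show ?thesis by metis
qed

lemma feasible_reduce_alphabet:
  fixes P :: "'x::finite \<Rightarrow> 'y::finite \<Rightarrow> real"
  assumes "\<forall>y. 0 < marg_Y P y" "feasible P eps k W"
  shows "\<exists>W'. feasible P eps CARD('y) W' \<and> mutual_info_UY P k W \<le> mutual_info_UY P CARD('y) W'"
proof -
  define U where "U = {u\<in>{..<k}. 0 < marg_U P W u}"
  define v :: "nat \<Rightarrow> real^'y" where "v u = (\<chi> y. W y u)" for u
  define p :: "real^'y" where "p = (\<chi> y. marg_Y P y)"
  define a where "a u = info_col P (\<lambda>y. W y u)" for u
  have W_nonneg: "\<forall>y u. u < k \<longrightarrow> 0 \<le> W y u"
    using assms(2) by (simp add: feasible_def is_kernel_def)
  have zero_col: "W y u = 0" if "u < k" "u \<notin> U" for y u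
  proof -
    have "\<forall>y. 0 \<le> W y u" using W_nonneg that(1) by blast
    moreover from this have "marg_U P W u = 0"
      using marg_U_nonneg[of P W u, OF assms(1)] that by (auto simp: U_def)
    ultimately show ?thesis
      by (rule col_eq_0_if_marg_U_eq_0[of P W u, OF assms(1)])
  qed
  have sum_U: "(\<Sum>u\<in>U. f u) = (\<Sum>u<k. f u)" if "\<And>u. u < k \<Longrightarrow> u \<notin> U \<Longrightarrow> f u = 0" for f :: "nat \<Rightarrow> real"
    using that by (intro sum.mono_neutral_left) (auto simp: U_def)
  have "linear (inner p)"
    by (rule bounded_linear_inner_right[THEN bounded_linear.linear])
  moreover have "\<forall>u\<in>U. 0 < inner p (v u)"
    by (simp add: U_def p_def v_def inner_vec_def marg_U_def)
  ultimately obtain l where l: "\<forall>u\<in>U. 0 \<le> l u" "(\<Sum>u\<in>U. l u *\<^sub>R v u) = (\<Sum>u\<in>U. 1 *\<^sub>R v u)"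
      "(\<Sum>u\<in>U. 1 * a u) \<le> (\<Sum>u\<in>U. l u * a u)" "card {u\<in>U. l u \<noteq> 0} \<le> CARD('y)"
    using conic_support_reduction[of U "inner p" v "\<lambda>_. 1" a] by (auto simp: U_def)
  have rows: "\<forall>y. (\<Sum>u\<in>U. l u * W y u) = 1"
  proof
    fix y
    have "(\<Sum>u\<in>U. l u * W y u) = (\<Sum>u\<in>U. W y u)"
      using arg_cong[OF l(2), of "\<lambda>x. x $ y"] by (simp add: v_def)
    also have "\<dots> = 1"
      using assms(2) zero_col by (simp add: sum_U feasible_def is_kernel_def)
    finally show "(\<Sum>u\<in>U. l u * W y u) = 1" .
  qed
  have "U \<subseteq> {..<k}" by (auto simp: U_def)
  then obtain W' where W': "feasible P eps CARD('y) W'"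
      "mutual_info_UY P CARD('y) W' = (\<Sum>u\<in>U. l u * a u)"
    using feasible_reweight_cols[OF assms _ l(1) rows l(4)] by (auto simp: a_def)
  have "mutual_info_UY P k W = (\<Sum>u\<in>U. a u)"
    using zero_col by (simp add: mutual_info_UY_eq_sum_info_col[OF assms(1) W_nonneg] sum_U a_def)
  then show ?thesis
    using W' l(3) by auto
qed

definition feasible_matrices :: "('x::finite \<Rightarrow> 'y::finite \<Rightarrow> real) \<Rightarrow> real \<Rightarrow> (real^'y^'j::finite) set" where
  "feasible_matrices P eps = {v. (\<forall>y. (\<Sum>j\<in>UNIV. v$j$y) = 1) \<and> (\<forall>j. col_feasible P eps (\<lambda>y. v$j$y))}"

lemma compact_feasible_matrices:
  fixes P :: "'x::finite \<Rightarrow> 'y::finite \<Rightarrow> real"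
  shows "compact (feasible_matrices P eps :: (real^'y^'j::finite) set)"
proof -
  have "closed (feasible_matrices P eps)"
    unfolding feasible_matrices_def col_feasible_def
    by (intro closed_Collect_conj closed_Collect_all closed_Collect_le closed_Collect_eq continuous_intros)
  moreover have "norm v \<le> real CARD('j) * CARD('y)" if "v \<in> feasible_matrices P eps" for v :: "real^'y^'j"
  proof -
    have "v$j$y \<le> 1" for j y
    proof -
      have "v$j$y \<le> (\<Sum>j\<in>UNIV. v$j$y)"
        using that by (intro member_le_sum) (auto simp: feasible_matrices_def col_feasible_def)
      then show ?thesis using that by (simp add: feasible_matrices_def)
    qed
    then have "\<bar>v$j$y\<bar> \<le> 1" for j y
      using that by (simp add: feasible_matrices_def col_feasible_def)
    then have "norm (v$j) \<le> real CARD('y)" for j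
      using norm_le_l1_cart[of "v$j"] sum_mono[of UNIV "\<lambda>y. \<bar>v$j$y\<bar>" "\<lambda>_. 1"] by simp
    then have "(\<Sum>j\<in>UNIV. norm (v$j)) \<le> real CARD('j) * CARD('y)"
      using sum_mono[of UNIV "\<lambda>j. norm (v$j)" "\<lambda>_. real CARD('y)"] by simp
    moreover have "norm v \<le> (\<Sum>j\<in>UNIV. norm (v$j))"
      unfolding norm_vec_def by (rule L2_set_le_sum) simp
    ultimately show ?thesis by linarith
  qed
  then have "bounded (feasible_matrices P eps :: (real^'y^'j) set)"
    unfolding bounded_iff by blast
  ultimately show ?thesis by (simp add: compact_eq_bounded_closed)
qed

lemma continuous_on_sum_info_col:
  fixes P :: "'x::finite \<Rightarrow> 'y::finite \<Rightarrow> real"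
  assumes "\<forall>y. 0 < marg_Y P y"
  shows "continuous_on (feasible_matrices P eps :: (real^'y^'j::finite) set)
    (\<lambda>v. \<Sum>j\<in>UNIV. info_col P (\<lambda>y. v$j$y))"
proof -
  define S :: "(real^'y^'j) set" where "S = feasible_matrices P eps"
  have xlnx_cont: "continuous_on S (\<lambda>v. xlnx (f v))"
    if "continuous_on S f" "\<forall>v\<in>S. 0 \<le> f v" for f
    using continuous_on_compose2[OF continuous_on_xlnx that(1)] that(2) by auto
  have nonneg: "\<forall>v\<in>S. 0 \<le> v$j$y" for j y
    by (simp add: S_def feasible_matrices_def col_feasible_def)
  have "continuous_on S (\<lambda>v. xlnx (v$j$y))" for j y
    using nonneg by (intro xlnx_cont continuous_intros) auto
  moreover have "continuous_on S (\<lambda>v. xlnx (\<Sum>y\<in>UNIV. marg_Y P y * v$j$y))" for j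
    using nonneg assms by (intro xlnx_cont continuous_intros) (auto intro!: sum_nonneg simp: less_imp_le)
  ultimately show ?thesis
    unfolding S_def[symmetric] info_col_def by (intro continuous_intros)
qed

lemma feasible_max_exists:
  fixes P :: "'x::finite \<Rightarrow> 'y::finite \<Rightarrow> real"
  assumes "is_pmf2 P" "\<forall>y. 0 < marg_Y P y" "0 \<le> eps"
  shows "\<exists>W0. feasible P eps CARD('y) W0 \<and>
    (\<forall>W. feasible P eps CARD('y) W \<longrightarrow> mutual_info_UY P CARD('y) W \<le> mutual_info_UY P CARD('y) W0)"
proof -
  define n where "n = CARD('y)"
  obtain h where h: "bij_betw h {..<n} (UNIV :: 'y set)"
    using ex_bij_betw_nat_finite[of "UNIV :: 'y set"] by (auto simp: n_def atLeast0LessThan)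
  define hinv where "hinv = the_inv_into {..<n} h"
  have hinv: "bij_betw hinv UNIV {..<n}"
    unfolding hinv_def by (rule bij_betw_the_inv_into[OF h])
  define S :: "(real^'y^'y) set" where "S = feasible_matrices P eps"
  define G :: "real^'y^'y \<Rightarrow> real" where "G v = (\<Sum>j\<in>UNIV. info_col P (\<lambda>y. v$j$y))" for v
  define kernel where "kernel v = kernel_of_cols n h (\<lambda>j y. v$j$y)" for v :: "real^'y^'y"
  have kernel: "feasible P eps n (kernel v) \<and> mutual_info_UY P n (kernel v) = G v" if "v \<in> S" for v
    using that assms(2) feasible_kernel_of_cols[OF assms(2) h order_refl]
      mutual_info_kernel_of_cols[OF assms(2) h order_refl]
    by (auto simp: kernel_def S_def G_def feasible_matrices_def col_feasible_def)
  have matrix: "(\<chi> j y. W y (hinv j)) \<in> S \<and> G (\<chi> j y. W y (hinv j)) = mutual_info_UY P n W"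
    if "feasible P eps n W" for W
  proof -
    have reindex: "(\<Sum>j\<in>UNIV. f (hinv j)) = (\<Sum>u<n. f u)" for f :: "nat \<Rightarrow> real"
      using sum.reindex_bij_betw[OF hinv] .
    have "hinv j < n" for j using hinv by (auto simp: bij_betw_def)
    then show ?thesis
      using that assms(2) reindex
      by (auto simp: S_def G_def feasible_matrices_def feasible_iff_col_feasible col_feasible_def
          mutual_info_UY_eq_sum_info_col)
  qed
  have "feasible P eps n (\<lambda>y u. if u = 0 then 1 else 0)"
    using assms by (simp add: feasible_iff_col_feasible n_def col_feasible_one if_distrib[of "\<lambda>w. col_feasible P eps w"])
  then have "S \<noteq> {}" using matrix by blast
  moreover have "continuous_on S G"
    unfolding S_def G_def by (rule continuous_on_sum_info_col[OF assms(2)])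
  ultimately obtain v0 where "v0 \<in> S" "\<forall>v\<in>S. G v \<le> G v0"
    using continuous_attains_sup[of S G] compact_feasible_matrices by (auto simp: S_def)
  then show ?thesis
    using kernel matrix unfolding n_def by metis
qed

theorem proposition2:
  fixes P :: "'x::finite \<Rightarrow> 'y::finite \<Rightarrow> real" and eps :: real
  assumes "is_pmf2 P"
    and "\<forall>x. 0 < marg_X P x"
    and "\<forall>y. 0 < marg_Y P y"
    and "CARD('x) < CARD('y)"
    and "rank (cond_XY_matrix P) = CARD('x)"
    and "0 \<le> eps"
  shows "Sup {mutual_info_UY P k W | k W. feasible P eps k W}
           = Sup {mutual_info_UY P k W | k W. feasible P eps k W \<and> k \<le> CARD('y)}
         \<and> (\<exists>k0 W0. feasible P eps k0 W0 \<and> k0 \<le> CARD('y) \<and>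
              (\<forall>k W. feasible P eps k W \<longrightarrow> mutual_info_UY P k W \<le> mutual_info_UY P k0 W0))"
proof -
  obtain W0 where W0: "feasible P eps CARD('y) W0"
    and W0_max: "\<And>W. feasible P eps CARD('y) W \<Longrightarrow>
      mutual_info_UY P CARD('y) W \<le> mutual_info_UY P CARD('y) W0"
    using feasible_max_exists[OF assms(1,3,6)] by blast
  have upper: "mutual_info_UY P k W \<le> mutual_info_UY P CARD('y) W0" if "feasible P eps k W" for k W
    using feasible_reduce_alphabet[OF assms(3) that] W0_max by (meson order_trans)
  have "Sup {mutual_info_UY P k W | k W. feasible P eps k W} = mutual_info_UY P CARD('y) W0"
    "Sup {mutual_info_UY P k W | k W. feasible P eps k W \<and> k \<le> CARD('y)} = mutual_info_UY P CARD('y) W0"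
    by (rule cSup_eq_maximum; use W0 upper in auto)+
  then show ?thesis
    using W0 upper by auto
qed

end
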